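(* For every integer $b\ge2$, digit $d\in\{0,\dots,b-1\}$ and $k\ge0$, $$H^{(k)}=\int_{[b^{-1},1)}\frac{d\mu_k(x)}{x}.$$
   Context: For an integer $n\ge0$, $k(n)$ denotes the number of occurrences of the digit $d$ in the base-$b$ representation of $n$ without leading zeros, and $H^{(k)}=\sum_{n\ge1,\ k(n)=k}1/n$. A string is a finite sequence $X=(d_l,\dots,d_1)$ of digits in $\{0,\dots,b-1\}$ (leading zeros allowed), of length $|X|=l\ge0$ (the empty string has length $0$); its value is $n(X)=\sum_{i=1}^{l}d_ib^{i-1}$ ($n(\emptyset)=0$). For $k\ge0$, $\mu_k$ is the discrete measure on $[0,1)$ defined by $\mu_k=\sum_{X}b^{-|X|}\delta_{n(X)/b^{|X|}}$, the sum running over all strings $X$ containing the digit $d$ exactly $k$ times (masses at the same point add). It has total mass $b$. *)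

theory Defs
  imports "HOL-Analysis.Analysis"
begin

function digit_count :: "nat \<Rightarrow> nat \<Rightarrow> nat \<Rightarrow> nat" where
  "digit_count b d n =
     (if n = 0 \<or> b < 2 then 0
      else (if n mod b = d then 1 else 0) + digit_count b d (n div b))"
  by auto
termination
  by (relation "Wellfounded.measure (\<lambda>(b, d, n). n)") auto

definition H :: "nat \<Rightarrow> nat \<Rightarrow> nat \<Rightarrow> ennreal" where
  "H b d k = (\<Sum>\<^sub>\<infinity> n \<in> {n. n \<ge> 1 \<and> digit_count b d n = k}. ennreal (1 / real n))"

text \<open>Strings: lists of digits, most significant first, X = (d_l, ..., d_1).\<close>
definition is_string :: "nat \<Rightarrow> nat list \<Rightarrow> bool" where
  "is_string b X \<longleftrightarrow> (\<forall>x \<in> set X. x < b)"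

definition str_val :: "nat \<Rightarrow> nat list \<Rightarrow> nat" where
  "str_val b X = foldl (\<lambda>a x. a * b + x) 0 X"

definition str_weight :: "nat \<Rightarrow> nat \<Rightarrow> nat \<Rightarrow> nat list \<Rightarrow> ennreal" where
  "str_weight b d k X =
     (if is_string b X \<and> count_list X d = k then ennreal (1 / real b ^ length X) else 0)"

text \<open>mu_k = sum_X b^(-|X|) delta_{n(X)/b^|X|}: push-forward of the weighted
  counting measure on strings under X \<mapsto> n(X)/b^|X|, a Borel measure on the reals
  (concentrated on [0,1)).\<close>
definition mu :: "nat \<Rightarrow> nat \<Rightarrow> nat \<Rightarrow> real measure" where
  "mu b d k = distr (density (count_space UNIV) (str_weight b d k)) borel
                (\<lambda>X. real (str_val b X) / real b ^ length X)"

end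

theory Submission
  imports Defs
begin

text \<open>The point x = n(X)/b^|X| lies in [1/b, 1) exactly when the string X has a nonzero
  leading digit, and for such X the integrand b^(-|X|)/x equals 1/n(X). Strings without
  leading zeros are precisely the base-b representations of the positive integers, and
  under this correspondence the number of digits d in X is k(n(X)). Hence the integral
  against \<mu>_k, which is a weighted sum over strings, reindexes to the sum defining H^(k).\<close>

lemma nn_integral_count_space_eq_SUP_finite:
  fixes f :: "'a::countable \<Rightarrow> ennreal"
  shows "(\<integral>\<^sup>+x. f x \<partial>count_space UNIV) = (SUP F\<in>{F. finite F \<and> F \<subseteq> UNIV}. sum f F)"
proof (rule antisym)
  define F where "F n = {x::'a. to_nat x < n}" for n
  have finite_F: "finite (F n)" for n
    unfolding F_def using finite_vimageI[of "{..<n}" "to_nat :: 'a \<Rightarrow> nat"]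
    by (simp add: vimage_def)
  have f_SUP: "f = (\<lambda>x. SUP n. f x * indicator (F n) x)"
  proof
    fix x
    show "f x = (SUP n. f x * indicator (F n) x)"
    proof (rule antisym)
      show "f x \<le> (SUP n. f x * indicator (F n) x)"
        by (rule SUP_upper2[of "Suc (to_nat x)"]) (auto simp: F_def)
    qed (rule SUP_least, simp add: indicator_def)
  qed
  have "incseq (\<lambda>n x. f x * indicator (F n) x)"
    by (auto simp: incseq_def le_fun_def F_def indicator_def)
  then have "(\<integral>\<^sup>+x. f x \<partial>count_space UNIV) = (SUP n. \<integral>\<^sup>+x. f x * indicator (F n) x \<partial>count_space UNIV)"
    by (subst f_SUP, intro nn_integral_monotone_convergence_SUP) simp_all
  also have "\<dots> = (SUP n. sum f (F n))"
    using finite_F by (simp add: nn_integral_indicator_finite)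
  also have "\<dots> \<le> (SUP F\<in>{F. finite F \<and> F \<subseteq> UNIV}. sum f F)"
    using finite_F by (auto intro!: SUP_least SUP_upper)
  finally show "(\<integral>\<^sup>+x. f x \<partial>count_space UNIV) \<le> (SUP F\<in>{F. finite F \<and> F \<subseteq> UNIV}. sum f F)" .
next
  show "(SUP F\<in>{F. finite F \<and> F \<subseteq> UNIV}. sum f F) \<le> (\<integral>\<^sup>+x. f x \<partial>count_space UNIV)"
  proof (rule SUP_least)
    fix G :: "'a set"
    assume "G \<in> {F. finite F \<and> F \<subseteq> UNIV}"
    then have "sum f G = (\<integral>\<^sup>+x. f x * indicator G x \<partial>count_space UNIV)"
      by (simp add: nn_integral_indicator_finite)
    also have "\<dots> \<le> (\<integral>\<^sup>+x. f x \<partial>count_space UNIV)"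
      by (intro nn_integral_mono) (simp add: indicator_def)
    finally show "sum f G \<le> (\<integral>\<^sup>+x. f x \<partial>count_space UNIV)" .
  qed
qed

lemma infsum_eq_nn_integral_count_space:
  fixes f :: "'a::countable \<Rightarrow> ennreal"
  shows "infsum f UNIV = (\<integral>\<^sup>+x. f x \<partial>count_space UNIV)"
  by (simp add: nn_integral_count_space_eq_SUP_finite nonneg_infsum_complete)

definition no_leading_zero :: "nat list \<Rightarrow> bool" where
  "no_leading_zero X \<longleftrightarrow> X \<noteq> [] \<and> hd X \<noteq> 0"

lemma str_val_Nil [simp]: "str_val b [] = 0"
  by (simp add: str_val_def)

lemma str_val_snoc [simp]: "str_val b (xs @ [x]) = str_val b xs * b + x"
  by (simp add: str_val_def)

lemma str_val_Cons: "str_val b (x # xs) = x * b ^ length xs + str_val b xs"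
proof (induction xs rule: rev_induct)
  case Nil
  show ?case
    using str_val_snoc[of b "[]" x] by simp
qed (simp flip: append_Cons add: algebra_simps)

lemma str_val_less_power: "is_string b X \<Longrightarrow> str_val b X < b ^ length X"
proof (induction X rule: rev_induct)
  case (snoc x xs)
  then have "str_val b xs + 1 \<le> b ^ length xs" and "x < b"
    by (auto simp: is_string_def)
  then have "(str_val b xs + 1) * b \<le> b ^ length xs * b"
    by (intro mult_right_mono) simp_all
  with \<open>x < b\<close> show ?case
    by (simp add: algebra_simps)
qed simp

lemma power_le_str_val:
  assumes "no_leading_zero X"
  shows "b ^ (length X - 1) \<le> str_val b X"
proof -
  obtain x xs where X: "X = x # xs" and "x \<noteq> 0"
    using assms by (cases X) (auto simp: no_leading_zero_def)
  have "b ^ (length X - 1) = 1 * b ^ length xs"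
    by (simp add: X)
  also have "\<dots> \<le> x * b ^ length xs"
    using \<open>x \<noteq> 0\<close> by (intro mult_right_mono) simp_all
  also have "\<dots> \<le> str_val b X"
    by (simp add: X str_val_Cons)
  finally show ?thesis .
qed

lemma str_val_pos: "b > 0 \<Longrightarrow> no_leading_zero X \<Longrightarrow> str_val b X > 0"
  using power_le_str_val[of X b] by (meson less_le_trans zero_less_power)

function base_digits :: "nat \<Rightarrow> nat \<Rightarrow> nat list" where
  "base_digits b n = (if n = 0 \<or> b < 2 then [] else base_digits b (n div b) @ [n mod b])"
  by auto
termination
  by (relation "Wellfounded.measure (\<lambda>(b, n). n)") auto

(* Both recursion equations are unconditional, so as simp rules they would unfold forever. *)
declare base_digits.simps [simp del] digit_count.simps [simp del]

lemma base_digits_0 [simp]: "base_digits b 0 = []"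
  by (subst base_digits.simps) simp

lemma base_digits_pos:
  "b \<ge> 2 \<Longrightarrow> n > 0 \<Longrightarrow> base_digits b n = base_digits b (n div b) @ [n mod b]"
  by (subst base_digits.simps) simp

lemma str_val_base_digits: "b \<ge> 2 \<Longrightarrow> str_val b (base_digits b n) = n"
  by (induction b n rule: base_digits.induct) (subst base_digits.simps, simp)

lemma is_string_base_digits: "is_string b (base_digits b n)"
  by (induction b n rule: base_digits.induct)
    (subst base_digits.simps, simp add: is_string_def)

lemma count_list_base_digits: "count_list (base_digits b n) d = digit_count b d n"
  by (induction b n rule: base_digits.induct)
    (subst base_digits.simps, subst digit_count.simps, simp)

lemma no_leading_zero_base_digits:
  assumes "b \<ge> 2" and "n > 0"
  shows "no_leading_zero (base_digits b n)"
  using assms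
proof (induction b n rule: base_digits.induct)
  case (1 b n)
  show ?case
  proof (cases "n div b = 0")
    case True
    then have "n mod b = n"
      using "1.prems"(1) by (auto simp: div_eq_0_iff)
    with True "1.prems" show ?thesis
      by (simp add: base_digits_pos no_leading_zero_def)
  next
    case False
    with "1.IH" "1.prems" have "no_leading_zero (base_digits b (n div b))"
      by simp
    with "1.prems" show ?thesis
      by (simp add: base_digits_pos[of b n] no_leading_zero_def)
  qed
qed

lemma base_digits_str_val:
  assumes "b \<ge> 2" and "is_string b X" and "X = [] \<or> no_leading_zero X"
  shows "base_digits b (str_val b X) = X"
  using assms(2,3)
proof (induction X rule: rev_induct)
  case (snoc x xs)
  have "x < b" and "is_string b xs"
    using snoc.prems(1) by (auto simp: is_string_def)
  have xs: "base_digits b (str_val b xs) = xs"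
    using snoc by (cases xs) (auto simp: no_leading_zero_def is_string_def)
  have "str_val b (xs @ [x]) > 0"
    using str_val_pos[of b "xs @ [x]"] snoc.prems(2) assms(1) by simp
  with \<open>x < b\<close> assms(1) xs show ?case
    by (simp add: base_digits_pos)
qed simp

lemma bij_betw_str_val_digit_count:
  assumes "b \<ge> 2"
  shows "bij_betw (str_val b) {X. is_string b X \<and> no_leading_zero X \<and> count_list X d = k}
           {n. n \<ge> 1 \<and> digit_count b d n = k}"
proof (rule bij_betw_byWitness[where f' = "base_digits b"])
  show "\<forall>X \<in> {X. is_string b X \<and> no_leading_zero X \<and> count_list X d = k}.
          base_digits b (str_val b X) = X"
    using base_digits_str_val[OF assms] by blast
  show "\<forall>n \<in> {n. n \<ge> 1 \<and> digit_count b d n = k}. str_val b (base_digits b n) = n"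
    using str_val_base_digits[OF assms] by blast
  show "str_val b ` {X. is_string b X \<and> no_leading_zero X \<and> count_list X d = k}
          \<subseteq> {n. n \<ge> 1 \<and> digit_count b d n = k}"
  proof (intro subsetI, elim imageE)
    fix X n
    assume X: "X \<in> {X. is_string b X \<and> no_leading_zero X \<and> count_list X d = k}"
      and n: "n = str_val b X"
    then have "n \<ge> 1"
      using str_val_pos[of b X] assms by (simp add: Suc_le_eq)
    moreover have "digit_count b d n = k"
      using X base_digits_str_val[OF assms, of X] by (simp add: n flip: count_list_base_digits)
    ultimately show "n \<in> {n. n \<ge> 1 \<and> digit_count b d n = k}"
      by simp
  qed
  show "base_digits b ` {n. n \<ge> 1 \<and> digit_count b d n = k}
          \<subseteq> {X. is_string b X \<and> no_leading_zero X \<and> count_list X d = k}"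
    using is_string_base_digits no_leading_zero_base_digits[OF assms] count_list_base_digits
    by auto
qed

definition str_point :: "nat \<Rightarrow> nat list \<Rightarrow> real" where
  "str_point b X = real (str_val b X) / real b ^ length X"

lemma nn_integral_mu:
  assumes "f \<in> borel_measurable borel"
  shows "(\<integral>\<^sup>+x. f x \<partial>mu b d k) = (\<integral>\<^sup>+X. str_weight b d k X * f (str_point b X) \<partial>count_space UNIV)"
  unfolding mu_def str_point_def
  by (subst nn_integral_distr) (simp_all add: assms nn_integral_density)

lemma str_point_in_range_iff:
  assumes "b \<ge> 2" and "is_string b X"
  shows "str_point b X \<in> {1 / real b ..< 1} \<longleftrightarrow> no_leading_zero X"
proof -
  have b: "real b > 0"
    using assms(1) by simp
  have "real (str_val b X) < real b ^ length X"
    using str_val_less_power[OF assms(2)] by (metis of_nat_less_iff of_nat_power)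
  then have below_1: "str_point b X < 1"
    using b by (simp add: str_point_def)
  show ?thesis
  proof (cases X)
    case Nil
    then show ?thesis
      using b by (simp add: str_point_def no_leading_zero_def)
  next
    case (Cons x xs)
    have "1 / real b \<le> str_point b X \<longleftrightarrow> real b ^ length xs \<le> real (str_val b X)"
      using b by (simp add: str_point_def Cons field_simps)
    also have "\<dots> \<longleftrightarrow> b ^ length xs \<le> str_val b X"
      by (metis of_nat_le_iff of_nat_power)
    also have "\<dots> \<longleftrightarrow> x \<noteq> 0"
    proof
      assume "b ^ length xs \<le> str_val b X"
      moreover have "str_val b xs < b ^ length xs"
        using assms(2) by (intro str_val_less_power) (simp add: Cons is_string_def)
      ultimately show "x \<noteq> 0"
        by (cases x) (auto simp: Cons str_val_Cons)
    next
      assume "x \<noteq> 0"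
      then show "b ^ length xs \<le> str_val b X"
        using power_le_str_val[of X b] by (simp add: Cons no_leading_zero_def)
    qed
    finally show ?thesis
      using below_1 by (simp add: Cons no_leading_zero_def)
  qed
qed

lemma str_weight_mult_inverse_str_point:
  assumes "b \<ge> 2"
  shows "str_weight b d k X * (ennreal (1 / str_point b X) * indicator {1 / real b ..< 1} (str_point b X))
       = (if is_string b X \<and> no_leading_zero X \<and> count_list X d = k
          then ennreal (1 / real (str_val b X)) else 0)"
proof (cases "is_string b X \<and> count_list X d = k \<and> no_leading_zero X")
  case True
  have weights: "real b ^ length X * str_point b X = real (str_val b X)"
    using assms by (simp add: str_point_def)
  have "str_weight b d k X = ennreal (1 / real b ^ length X)"
    using True by (simp add: str_weight_def)
  moreover have "indicator {1 / real b ..< 1} (str_point b X) = (1 :: ennreal)"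
    using True assms str_point_in_range_iff[of b X] by (simp add: indicator_def)
  ultimately have "str_weight b d k X *
      (ennreal (1 / str_point b X) * indicator {1 / real b ..< 1} (str_point b X))
      = ennreal (1 / real b ^ length X) * ennreal (1 / str_point b X)"
    by simp
  also have "\<dots> = ennreal (1 / real (str_val b X))"
    by (subst ennreal_mult'[symmetric]) (simp_all add: weights)
  finally show ?thesis
    using True by simp
next
  case False
  with assms str_point_in_range_iff[of b X] show ?thesis
    by (auto simp: str_weight_def indicator_def)
qed

theorem mainTheorem5:
  fixes b d k :: nat
  assumes "b \<ge> 2" and "d < b"
  shows "H b d k = (\<integral>\<^sup>+ x. ennreal (1 / x) * indicator {1 / real b ..< 1} x \<partial>(mu b d k))"
proof -
  let ?S = "{X. is_string b X \<and> no_leading_zero X \<and> count_list X d = k}"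
  have "H b d k = infsum (\<lambda>X. ennreal (1 / real (str_val b X))) ?S"
    unfolding H_def
    by (rule infsum_reindex_bij_betw[OF bij_betw_str_val_digit_count[OF assms(1)], symmetric])
  also have "\<dots> = infsum (\<lambda>X. if X \<in> ?S then ennreal (1 / real (str_val b X)) else 0) UNIV"
    by (rule infsum_cong_neutral) auto
  also have "\<dots> = (\<integral>\<^sup>+X. str_weight b d k X *
      (ennreal (1 / str_point b X) * indicator {1 / real b ..< 1} (str_point b X)) \<partial>count_space UNIV)"
    by (simp add: infsum_eq_nn_integral_count_space str_weight_mult_inverse_str_point[OF assms(1)])
  also have "\<dots> = (\<integral>\<^sup>+ x. ennreal (1 / x) * indicator {1 / real b ..< 1} x \<partial>(mu b d k))"
    by (rule nn_integral_mu[symmetric]) simp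
  finally show ?thesis .
qed

end
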